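(* Let $1 \le s \le r$ be fixed integers and $n \ge r$. Define $\theta = \binom{n-s}{r-s}\big/\binom{n}{r}$ and $\psi = \dfrac{r^r\, n^{-(s+2)}}{(\max\{r-2s,0\})!}$. Then for any sequence of nonnegative integers $k = k_n$ with $k = O(n^s\log n)$, as $n \to \infty$, \[ (1 - 2\theta + \psi)^k = (1-\theta)^{2k}\left(1 + O\!\left(\frac{\log n}{n^{\min\{2,s\}}}\right)\right). \] *)

theory Defs
  imports Complex_Main "HOL-Library.Landau_Symbols"
begin

definition theta :: "nat \<Rightarrow> nat \<Rightarrow> nat \<Rightarrow> real" where
  "theta r s n = real ((n - s) choose (r - s)) / real (n choose r)"

text \<open>psi = r^r n^(-(s+2)) / (max (r-2s) 0)!; nat subtraction r - 2*s realises max (r-2s) 0.\<close>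
definition psi :: "nat \<Rightarrow> nat \<Rightarrow> nat \<Rightarrow> real" where
  "psi r s n = real r ^ r / (real n ^ (s + 2) * fact (r - 2 * s))"

end

theory Submission
  imports Defs
begin

(*
  Write 1 - 2 theta + psi = (1 - theta)^2 (1 + d) with d = (psi - theta^2) / (1 - theta)^2.
  Since theta = binom(r, s) / binom(n, s) = O(n^-s) and psi = O(n^-(s+2)), the defect d is
  O(n^-(s + min 2 s)), so k d = O(log n / n^(min 2 s)) tends to 0; and (1 + d)^k = 1 + O(k d)
  as soon as k d tends to 0.
*)

lemma abs_one_plus_power_sub_one_le:
  fixes d :: real
  shows "\<bar>(1 + d) ^ k - 1\<bar> \<le> (1 + \<bar>d\<bar>) ^ k - 1"
proof (induction k)
  case 0
  then show ?case by simp
next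
  case (Suc k)
  have "(1 + d) ^ Suc k - 1 = (1 + d) * ((1 + d) ^ k - 1) + d"
    by (simp add: algebra_simps)
  then have "\<bar>(1 + d) ^ Suc k - 1\<bar> \<le> \<bar>1 + d\<bar> * \<bar>(1 + d) ^ k - 1\<bar> + \<bar>d\<bar>"
    by (metis abs_mult abs_triangle_ineq)
  also have "\<dots> \<le> (1 + \<bar>d\<bar>) * ((1 + \<bar>d\<bar>) ^ k - 1) + \<bar>d\<bar>"
    by (intro add_mono mult_mono Suc.IH) auto
  also have "\<dots> = (1 + \<bar>d\<bar>) ^ Suc k - 1"
    by (simp add: algebra_simps)
  finally show ?case .
qed

lemma abs_one_plus_power_sub_one_le_linear:
  fixes d :: real
  assumes "real k * \<bar>d\<bar> \<le> 1"
  shows "\<bar>(1 + d) ^ k - 1\<bar> \<le> 2 * real k * \<bar>d\<bar>"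
proof -
  have "(1 + \<bar>d\<bar>) ^ k \<le> exp \<bar>d\<bar> ^ k"
    by (intro power_mono) auto
  also have "\<dots> = exp (real k * \<bar>d\<bar>)"
    by (simp add: exp_of_nat_mult)
  also have "\<dots> \<le> 1 + real k * \<bar>d\<bar> + (real k * \<bar>d\<bar>) ^ 2"
    using assms by (intro exp_bound) auto
  also have "(real k * \<bar>d\<bar>) ^ 2 \<le> real k * \<bar>d\<bar>"
    using assms by (simp add: power2_eq_square mult_left_le)
  finally show ?thesis
    using abs_one_plus_power_sub_one_le[of d k] by linarith
qed

lemma one_plus_power_sub_one_bigo:
  fixes d :: "'a \<Rightarrow> real" and k :: "'a \<Rightarrow> nat"
  assumes "((\<lambda>x. real (k x) * d x) \<longlongrightarrow> 0) F"
  shows "(\<lambda>x. (1 + d x) ^ k x - 1) \<in> O[F](\<lambda>x. real (k x) * d x)"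
proof (rule bigoI)
  have "eventually (\<lambda>x. \<bar>real (k x) * d x\<bar> < 1) F"
    using order_tendstoD(2)[OF tendsto_rabs[OF assms]] by simp
  then show "eventually (\<lambda>x. norm ((1 + d x) ^ k x - 1) \<le> 2 * norm (real (k x) * d x)) F"
  proof eventually_elim
    case (elim x)
    then show ?case
      using abs_one_plus_power_sub_one_le_linear[of "k x" "d x"] by (simp add: abs_mult)
  qed
qed

lemma one_sub_two_mult_add_eq:
  fixes t p :: real
  assumes "t \<noteq> 1"
  shows "1 - 2 * t + p = (1 - t) ^ 2 * (1 + (p - t ^ 2) / (1 - t) ^ 2)"
proof -
  have "(1 - t) ^ 2 * (1 + (p - t ^ 2) / (1 - t) ^ 2) = (1 - t) ^ 2 + (p - t ^ 2)"
    using assms by (simp add: distrib_left)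
  then show ?thesis
    by (simp add: power2_eq_square algebra_simps)
qed

lemma inverse_power_bigo_mono:
  assumes "a \<le> b"
  shows "(\<lambda>n. 1 / real n ^ b) \<in> O(\<lambda>n. 1 / real n ^ a)"
proof (rule bigoI)
  show "eventually (\<lambda>n. norm (1 / real n ^ b) \<le> 1 * norm (1 / real n ^ a)) at_top"
    using eventually_ge_at_top[of "1::nat"]
    by eventually_elim (use assms in \<open>auto intro!: divide_left_mono power_increasing\<close>)
qed

lemma inverse_power_smallo_one:
  assumes "1 \<le> a"
  shows "(\<lambda>n. 1 / real n ^ a) \<in> o(\<lambda>_. 1)"
proof (rule smalloI_tendsto)
  show "((\<lambda>n. 1 / real n ^ a / 1) \<longlongrightarrow> 0) at_top"
    using tendsto_null_power[OF lim_1_over_n, of a] assms by (simp add: power_one_over)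
qed simp

lemma ln_over_power_smallo_one:
  assumes "1 \<le> m"
  shows "(\<lambda>n. ln (real n) / real n ^ m) \<in> o(\<lambda>_. 1)"
proof -
  have "(\<lambda>n. ln (real n) * (1 / real n ^ m)) \<in> O(\<lambda>n. ln (real n) * (1 / real n ^ 1))"
    using inverse_power_bigo_mono[OF assms] by (rule landau_o.big.mult_left)
  moreover have "(\<lambda>n. ln (real n) / real n) \<in> o(\<lambda>_. 1)"
  proof (rule smalloI_tendsto)
    show "((\<lambda>n. ln (real n) / real n / 1) \<longlongrightarrow> 0) at_top"
      using filterlim_compose[OF ln_x_over_x_tendsto_0 filterlim_real_sequentially] by (simp add: o_def)
  qed simp
  ultimately show ?thesis
    by (simp add: landau_o.big_small_trans)
qed

lemma theta_eq_choose_ratio: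
  assumes "s \<le> r" "r \<le> n"
  shows "theta r s n = real (r choose s) / real (n choose s)"
proof -
  have "real (n choose r) * real (r choose s) = real (n choose s) * real ((n - s) choose (r - s))"
    using choose_mult[OF assms] by (metis of_nat_mult)
  moreover have "n choose r > 0" "n choose s > 0"
    using assms by auto
  ultimately show ?thesis
    unfolding theta_def by (simp add: field_simps)
qed

lemma theta_le:
  assumes "s \<le> r" "r \<le> n"
  shows "theta r s n \<le> real (r choose s) * real s ^ s / real n ^ s"
proof -
  have "(real n / real s) ^ s \<le> real (n choose s)"
    using assms by (intro binomial_ge_n_over_k_pow_k) auto
  moreover have "(real n / real s) ^ s > 0"
    using assms by (cases "s = 0") auto
  ultimately have "real (r choose s) / real (n choose s) \<le> real (r choose s) / (real n / real s) ^ s"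
    using assms by (intro divide_left_mono) (auto intro!: mult_pos_pos)
  then show ?thesis
    using theta_eq_choose_ratio[OF assms] by (simp add: power_divide)
qed

lemma theta_bigo:
  assumes "s \<le> r"
  shows "theta r s \<in> O(\<lambda>n. 1 / real n ^ s)"
proof (rule bigoI)
  show "eventually (\<lambda>n. norm (theta r s n) \<le> real (r choose s) * real s ^ s * norm (1 / real n ^ s)) at_top"
    using eventually_ge_at_top[of r]
  proof eventually_elim
    case (elim n)
    then show ?case
      using theta_le[OF assms elim] by (simp add: theta_def)
  qed
qed

lemma theta_tendsto_zero:
  assumes "1 \<le> s" "s \<le> r"
  shows "theta r s \<longlonglongrightarrow> 0"
  using smalloD_tendsto[OF landau_o.big_small_trans[OF theta_bigo inverse_power_smallo_one]] assms
  by simp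

lemma psi_bigo: "psi r s \<in> O(\<lambda>n. 1 / real n ^ (s + 2))"
proof (rule bigoI)
  show "eventually (\<lambda>n. norm (psi r s n) \<le> (real r ^ r / fact (r - 2 * s)) * norm (1 / real n ^ (s + 2))) at_top"
    by (simp add: psi_def field_simps)
qed

lemma theta_psi_defect_bigo:
  assumes "1 \<le> s" "s \<le> r"
  shows "(\<lambda>n. (psi r s n - theta r s n ^ 2) / (1 - theta r s n) ^ 2) \<in> O(\<lambda>n. 1 / real n ^ (s + min 2 s))"
proof -
  have psi: "psi r s \<in> O(\<lambda>n. 1 / real n ^ (s + min 2 s))"
    using psi_bigo inverse_power_bigo_mono[of "s + min 2 s" "s + 2"] by (auto intro: landau_o.big_trans)
  have "(\<lambda>n. theta r s n ^ 2) \<in> O(\<lambda>n. (1 / real n ^ s) ^ 2)"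
    using theta_bigo[OF assms(2)] by (rule landau_o.big_power)
  then have "(\<lambda>n. theta r s n ^ 2) \<in> O(\<lambda>n. 1 / real n ^ (2 * s))"
    by (simp add: power_mult power_one_over mult.commute)
  then have theta_sq: "(\<lambda>n. theta r s n ^ 2) \<in> O(\<lambda>n. 1 / real n ^ (s + min 2 s))"
    using inverse_power_bigo_mono[of "s + min 2 s" "2 * s"] by (auto intro: landau_o.big_trans)
  have "((\<lambda>n. 1 / (1 - theta r s n) ^ 2 / 1) \<longlongrightarrow> 1 / (1 - 0) ^ 2 / 1) at_top"
    by (intro tendsto_intros theta_tendsto_zero assms) simp_all
  then have "(\<lambda>n. 1 / (1 - theta r s n) ^ 2) \<in> O(\<lambda>_. 1)"
    by (rule bigoI_tendsto) simp
  with sum_in_bigo(2)[OF psi theta_sq] show ?thesis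
    by (auto dest: landau_o.big_1_mult)
qed

theorem corollary1:
  fixes r s :: nat and k :: "nat \<Rightarrow> nat"
  assumes "1 \<le> s" and "s \<le> r"
    and "(\<lambda>n. real (k n)) \<in> O(\<lambda>n. real n ^ s * ln (real n))"
  shows "\<exists>e :: nat \<Rightarrow> real. e \<in> O(\<lambda>n. ln (real n) / real n ^ min 2 s) \<and>
           (\<forall>\<^sub>F n in at_top. (1 - 2 * theta r s n + psi r s n) ^ k n
                = (1 - theta r s n) ^ (2 * k n) * (1 + e n))"
proof -
  define m where "m = min 2 s"
  define d where "d n = (psi r s n - theta r s n ^ 2) / (1 - theta r s n) ^ 2" for n
  have "(\<lambda>n. real (k n) * d n) \<in> O(\<lambda>n. real n ^ s * ln (real n) * (1 / real n ^ (s + m)))"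
    using landau_o.big.mult[OF assms(3) theta_psi_defect_bigo[OF assms(1,2)]]
    unfolding d_def m_def .
  then have kd: "(\<lambda>n. real (k n) * d n) \<in> O(\<lambda>n. ln (real n) / real n ^ m)"
    by (rule landau_o.big.ev_eq_trans1)
      (auto intro: eventually_mono[OF eventually_gt_at_top[of 0]] simp: power_add)
  have ln_small: "(\<lambda>n. ln (real n) / real n ^ m) \<in> o(\<lambda>_. 1)"
    using assms(1) by (intro ln_over_power_smallo_one) (simp add: m_def)
  have "(\<lambda>n. real (k n) * d n) \<longlonglongrightarrow> 0"
    using smalloD_tendsto[OF landau_o.big_small_trans[OF kd ln_small]] by simp
  then have e: "(\<lambda>n. (1 + d n) ^ k n - 1) \<in> O(\<lambda>n. ln (real n) / real n ^ m)"
    by (rule landau_o.big_trans[OF one_plus_power_sub_one_bigo kd])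
  have "eventually (\<lambda>n. theta r s n < 1) at_top"
    using order_tendstoD(2)[OF theta_tendsto_zero[OF assms(1,2)]] by simp
  then have "\<forall>\<^sub>F n in at_top. (1 - 2 * theta r s n + psi r s n) ^ k n
                = (1 - theta r s n) ^ (2 * k n) * (1 + ((1 + d n) ^ k n - 1))"
    by eventually_elim (simp add: one_sub_two_mult_add_eq d_def power_mult power_mult_distrib)
  with e show ?thesis
    unfolding m_def by blast
qed

end
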